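(* Let $\beta>0$ and $0<c<1$. For every $\mathrm{v}\in\mathbb{Z}_{\geq 0}$ and every $x\in\mathbb{Z}_{\geq 0}$, $$\check{\xi}_{\mathrm{v}}(x;\beta,c)\;=\;{}_2F_1\Bigl(\genfrac{}{}{0pt}{}{-\mathrm{v},\,-x}{\beta}\Bigm|1-c\Bigr)\;=\;\sum_{k=0}^{\min(\mathrm{v},x)}\frac{(-\mathrm{v})_k(-x)_k}{(\beta)_k\,k!}(1-c)^k\;>\;0 .$$
   Context: $(a)_k=a(a+1)\cdots(a+k-1)$ is the Pochhammer symbol, $(a)_0=1$. The function $\check{\xi}_{\mathrm{v}}$ is the Meixner polynomial $M_{\mathrm{v}}(x;\beta,c^{-1})={}_2F_1(-\mathrm{v},-x;\beta;1-c)$ with the parameter $c$ replaced by $c^{-1}$ (the "virtual state polynomial" of the Meixner system). *)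

theory Defs
  imports Complex_Main
begin

text \<open>Terminating Gauss hypergeometric series 2F1(-n, b; c; z), n a nonnegative integer:
  the series terminates after the term k = n since (-n)_k = 0 for k > n.\<close>
definition hyp2F1_term :: "nat \<Rightarrow> real \<Rightarrow> real \<Rightarrow> real \<Rightarrow> real" where
  "hyp2F1_term n b c z =
     (\<Sum>k\<le>n. pochhammer (- real n) k * pochhammer b k / (pochhammer c k * fact k) * z ^ k)"

text \<open>Virtual state polynomial of the Meixner system:
  xi_check_v(x; beta, c) = M_v(x; beta, 1/c) = 2F1(-v, -x; beta; 1 - c).\<close>
definition xi_check :: "nat \<Rightarrow> real \<Rightarrow> real \<Rightarrow> real \<Rightarrow> real" where
  "xi_check v x \<beta> c = hyp2F1_term v (- x) \<beta> (1 - c)"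

end

theory Submission
  imports Defs
begin

text \<open>For natural \<open>m, n\<close> both Pochhammer symbols \<open>(-m)\<^sub>k, (-n)\<^sub>k\<close> have sign \<open>(-1)^k\<close>
  as long as neither vanishes, so every term of \<open>\<^sub>2F\<^sub>1(-n, -m; b; z)\<close> with \<open>b > 0\<close>, \<open>z \<ge> 0\<close>
  is nonnegative, and the \<open>k = 0\<close> term equals 1.\<close>

lemma sign_pochhammer_neg_of_nat_nonneg:
  assumes "k \<le> n"
  shows "0 \<le> (-1) ^ k * pochhammer (- real n) k"
proof -
  have "0 \<le> pochhammer (real n - real k + 1) k"
    using assms by (intro pochhammer_nonneg) simp
  then show ?thesis
    by (simp add: pochhammer_minus power_mult_distrib[symmetric])
qed

lemma pochhammer_neg_of_nat_mult_nonneg: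
  "0 \<le> pochhammer (- real m) k * pochhammer (- real n) k"
proof (cases "k \<le> m \<and> k \<le> n")
  case True
  have "pochhammer (- real m) k * pochhammer (- real n) k
      = ((-1) ^ k * pochhammer (- real m) k) * ((-1) ^ k * pochhammer (- real n) k)"
    by (simp add: power_mult_distrib[symmetric])
  also have "\<dots> \<ge> 0"
    using True by (intro mult_nonneg_nonneg sign_pochhammer_neg_of_nat_nonneg) auto
  finally show ?thesis .
next
  case False
  then show ?thesis
    using pochhammer_of_nat_eq_0_iff[of m k, where ?'a = real]
          pochhammer_of_nat_eq_0_iff[of n k, where ?'a = real]
    by auto
qed

lemma hyp2F1_term_neg_of_nat_truncate:
  "hyp2F1_term n (- real m) b z =
     (\<Sum>k\<le>min n m. pochhammer (- real n) k * pochhammer (- real m) k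
                      / (pochhammer b k * fact k) * z ^ k)"
  unfolding hyp2F1_term_def
proof (rule sum.mono_neutral_right)
  show "\<forall>k\<in>{..n} - {..min n m}. pochhammer (- real n) k * pochhammer (- real m) k
                                  / (pochhammer b k * fact k) * z ^ k = 0"
  proof
    fix k assume "k \<in> {..n} - {..min n m}"
    then have "m < k" by auto
    then have "pochhammer (- real m) k = 0"
      by (simp add: pochhammer_of_nat_eq_0_iff)
    then show "pochhammer (- real n) k * pochhammer (- real m) k
               / (pochhammer b k * fact k) * z ^ k = 0" by simp
  qed
qed auto

lemma hyp2F1_term_neg_of_nat_ge_1:
  assumes "b > 0" and "z \<ge> 0"
  shows "1 \<le> hyp2F1_term n (- real m) b z"
proof -
  let ?t = "\<lambda>k. pochhammer (- real n) k * pochhammer (- real m) k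
                 / (pochhammer b k * fact k) * z ^ k"
  have "0 \<le> ?t k" for k
  proof (rule mult_nonneg_nonneg)
    show "0 \<le> pochhammer (- real n) k * pochhammer (- real m) k / (pochhammer b k * fact k)"
      using assms pochhammer_pos[of b k]
      by (intro divide_nonneg_pos pochhammer_neg_of_nat_mult_nonneg) auto
    show "0 \<le> z ^ k"
      using assms by simp
  qed
  then have "?t 0 \<le> (\<Sum>k\<le>n. ?t k)"
    by (intro member_le_sum) auto
  then show ?thesis
    by (simp add: hyp2F1_term_def)
qed

theorem mainTheorem1:
  fixes \<beta> c :: real and v x :: nat
  assumes "\<beta> > 0" and "0 < c" and "c < 1"
  shows "xi_check v (real x) \<beta> c =
           (\<Sum>k\<le>min v x. pochhammer (- real v) k * pochhammer (- real x) k
                            / (pochhammer \<beta> k * fact k) * (1 - c) ^ k)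
       \<and> (\<Sum>k\<le>min v x. pochhammer (- real v) k * pochhammer (- real x) k
                            / (pochhammer \<beta> k * fact k) * (1 - c) ^ k) > 0"
proof -
  have "1 \<le> xi_check v (real x) \<beta> c"
    using assms unfolding xi_check_def by (intro hyp2F1_term_neg_of_nat_ge_1) auto
  then show ?thesis
    unfolding xi_check_def hyp2F1_term_neg_of_nat_truncate by simp
qed

end
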